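(* In HotStuff with $n$ validators, if there is a safety violation (COMMIT quorum certificates exist for two conflicting blocks), then one can identify at least $n/3$ validators each of which has violated one of the HotStuff slashing conditions.
   Context: HotStuff: execution proceeds in views, each with a leader. Votes carry a block, a view number and a type among PREPARE, PRE-COMMIT, COMMIT. A quorum certificate (QC) is a collection of at least $2n/3$ votes of the same type, view and block. In each view the leader proposes a block justified by the highest PREPARE QC it knows; validators vote PREPARE for the proposal only if it is safe (the safeNode rule: it extends the block the validator is locked on, or its justifying PREPARE QC has a higher view than the lock); given a PREPARE QC the validators vote PRE-COMMIT, and upon a PRE-COMMIT QC for a block a validator locks on it and votes COMMIT; a block is decided once it has a COMMIT QC. HotStuff slashing conditions: a validator violates a slashing condition if (1) it votes more than once for the same type and the same view, or (2) it votes COMMIT for a block $B_1$ in view $v_1$ and later votes PREPARE for a block $B_2$ conflicting with $B_1$ in a view $v_2>v_1$, unless there has been a PREPARE QC for a block conflicting with $B_1$ in some view $v$ with $v_1<v<v_2$. *)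

theory Defs
  imports Main
begin

datatype vtype = Prepare | PreCommit | Commit

definition extends :: "('b \<Rightarrow> 'b option) \<Rightarrow> 'b \<Rightarrow> 'b \<Rightarrow> bool" where
  "extends parent b a \<longleftrightarrow> (b, a) \<in> {(x, y). parent x = Some y}\<^sup>*"

definition conflicting :: "('b \<Rightarrow> 'b option) \<Rightarrow> 'b \<Rightarrow> 'b \<Rightarrow> bool" where
  "conflicting parent b1 b2 \<longleftrightarrow> \<not> extends parent b1 b2 \<and> \<not> extends parent b2 b1"

text \<open>A vote is a tuple (validator, type, view, block); Votes is the set of all
  votes ever cast.\<close>
type_synonym ('v, 'b) vote = "'v \<times> vtype \<times> nat \<times> 'b"

definition is_qc :: "'v set \<Rightarrow> ('v, 'b) vote set \<Rightarrow> vtype \<Rightarrow> nat \<Rightarrow> 'b \<Rightarrow> 'v set \<Rightarrow> bool" where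
  "is_qc V Votes t w b Q \<longleftrightarrow> Q \<subseteq> V \<and> 3 * card Q \<ge> 2 * card V \<and> (\<forall>x\<in>Q. (x, t, w, b) \<in> Votes)"

definition has_qc :: "'v set \<Rightarrow> ('v, 'b) vote set \<Rightarrow> vtype \<Rightarrow> nat \<Rightarrow> 'b \<Rightarrow> bool" where
  "has_qc V Votes t w b \<longleftrightarrow> (\<exists>Q. is_qc V Votes t w b Q)"

definition valid_votes :: "'v set \<Rightarrow> ('v, 'b) vote set \<Rightarrow> bool" where
  "valid_votes V Votes \<longleftrightarrow>
     (\<forall>x w b. (x, PreCommit, w, b) \<in> Votes \<longrightarrow> has_qc V Votes Prepare w b) \<and>
     (\<forall>x w b. (x, Commit, w, b) \<in> Votes \<longrightarrow> has_qc V Votes PreCommit w b)"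

definition slash1 :: "('v, 'b) vote set \<Rightarrow> 'v \<Rightarrow> bool" where
  "slash1 Votes x \<longleftrightarrow> (\<exists>t w b b'. b \<noteq> b' \<and> (x, t, w, b) \<in> Votes \<and> (x, t, w, b') \<in> Votes)"

definition slash2 :: "('b \<Rightarrow> 'b option) \<Rightarrow> 'v set \<Rightarrow> ('v, 'b) vote set \<Rightarrow> 'v \<Rightarrow> bool" where
  "slash2 parent V Votes x \<longleftrightarrow>
     (\<exists>b1 w1 b2 w2. (x, Commit, w1, b1) \<in> Votes \<and> (x, Prepare, w2, b2) \<in> Votes \<and>
        w1 < w2 \<and> conflicting parent b1 b2 \<and>
        \<not> (\<exists>w b. w1 < w \<and> w < w2 \<and> conflicting parent b1 b \<and> has_qc V Votes Prepare w b))"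

definition violates :: "('b \<Rightarrow> 'b option) \<Rightarrow> 'v set \<Rightarrow> ('v, 'b) vote set \<Rightarrow> 'v \<Rightarrow> bool" where
  "violates parent V Votes x \<longleftrightarrow> slash1 Votes x \<or> slash2 parent V Votes x"

end

theory Submission
  imports Defs
begin

text \<open>Let the COMMIT QCs for the conflicting blocks have views \<open>w1 \<le> w2\<close>.
  If \<open>w1 = w2\<close>, every validator in both QCs voted COMMIT twice in one view.
  Otherwise the COMMIT QC at \<open>w2\<close> entails a PREPARE QC at \<open>w2\<close> for a block
  conflicting with \<open>b1\<close>; take the least view \<open>w > w1\<close> carrying such a PREPARE QC.
  Every validator in both the COMMIT QC at \<open>w1\<close> and that PREPARE QC violates
  condition (2), since by minimality no conflicting PREPARE QC lies strictly
  between \<open>w1\<close> and \<open>w\<close>. In either case two quorums of size \<open>\<ge> 2n/3\<close>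
  meet in \<open>\<ge> n/3\<close> validators.\<close>

lemma conflicting_sym: "conflicting parent a b \<Longrightarrow> conflicting parent b a"
  unfolding conflicting_def by auto

lemma conflicting_imp_neq: "conflicting parent a b \<Longrightarrow> a \<noteq> b"
  unfolding conflicting_def extends_def by auto

lemma qc_intersection_card:
  assumes "finite V" "is_qc V Votes t w b Q" "is_qc V Votes t' w' b' Q'"
  shows "3 * card (Q \<inter> Q') \<ge> card V"
proof -
  have sub: "Q \<subseteq> V" "Q' \<subseteq> V" and big: "3 * card Q \<ge> 2 * card V" "3 * card Q' \<ge> 2 * card V"
    using assms(2,3) unfolding is_qc_def by auto
  have "finite Q" "finite Q'" using sub assms(1) finite_subset by auto
  then have "card Q + card Q' = card (Q \<union> Q') + card (Q \<inter> Q')" by (rule card_Un_Int)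
  moreover have "card (Q \<union> Q') \<le> card V"
    using sub assms(1) by (intro card_mono) auto
  ultimately show ?thesis using big by linarith
qed

lemma accountable_if_qc_intersection_violates:
  assumes "finite V" "is_qc V Votes t w b Q" "is_qc V Votes t' w' b' Q'"
    and "\<forall>x\<in>Q \<inter> Q'. violates parent V Votes x"
  shows "\<exists>S \<subseteq> V. 3 * card S \<ge> card V \<and> (\<forall>x\<in>S. violates parent V Votes x)"
proof (intro exI conjI)
  show "Q \<inter> Q' \<subseteq> V" using assms(2) unfolding is_qc_def by auto
qed (use assms qc_intersection_card in auto)

text \<open>If \<open>V = {}\<close> the empty set is a QC for anything; otherwise a QC has a member
  whose vote yields the new QC.\<close>

lemma has_qc_if_voters_have_qc:
  assumes "finite V" "has_qc V Votes t w b"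
    and "\<And>x. (x, t, w, b) \<in> Votes \<Longrightarrow> has_qc V Votes t' w b"
  shows "has_qc V Votes t' w b"
proof -
  obtain Q where Q: "is_qc V Votes t w b Q" using assms(2) unfolding has_qc_def by blast
  show ?thesis
  proof (cases "Q = {}")
    case True
    with Q assms(1) have "V = {}" unfolding is_qc_def by simp
    then show ?thesis unfolding has_qc_def is_qc_def by auto
  next
    case False
    with Q assms(3) show ?thesis unfolding is_qc_def by blast
  qed
qed

lemma prepare_qc_if_commit_qc:
  assumes fin: "finite V" and valid: "valid_votes V Votes" and "has_qc V Votes Commit w b"
  shows "has_qc V Votes Prepare w b"
proof -
  have "has_qc V Votes PreCommit w b"
    using fin \<open>has_qc V Votes Commit w b\<close>
  proof (rule has_qc_if_voters_have_qc)
    show "has_qc V Votes PreCommit w b" if "(x, Commit, w, b) \<in> Votes" for x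
      using that valid unfolding valid_votes_def by blast
  qed
  with fin show ?thesis
  proof (rule has_qc_if_voters_have_qc)
    show "has_qc V Votes Prepare w b" if "(x, PreCommit, w, b) \<in> Votes" for x
      using that valid unfolding valid_votes_def by blast
  qed
qed

lemma slash1_if_commit_qcs_same_view:
  assumes "is_qc V Votes Commit w b1 Q1" "is_qc V Votes Commit w b2 Q2" "b1 \<noteq> b2"
    and "x \<in> Q1 \<inter> Q2"
  shows "slash1 Votes x"
proof -
  have "(x, Commit, w, b1) \<in> Votes" "(x, Commit, w, b2) \<in> Votes"
    using assms(1,2,4) unfolding is_qc_def by auto
  with assms(3) show ?thesis unfolding slash1_def by blast
qed

lemma first_conflicting_prepare_qc:
  assumes "w1 < w2" "conflicting parent b1 b2" "has_qc V Votes Prepare w2 b2"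
  obtains w b where "w1 < w" "conflicting parent b1 b" "has_qc V Votes Prepare w b"
    and "\<not> (\<exists>u c. w1 < u \<and> u < w \<and> conflicting parent b1 c \<and> has_qc V Votes Prepare u c)"
proof -
  define P where "P w \<longleftrightarrow> w1 < w \<and> (\<exists>b. conflicting parent b1 b \<and> has_qc V Votes Prepare w b)"
    for w
  define w where "w = (LEAST w. P w)"
  have "P w2" unfolding P_def using assms by blast
  then have "P w" unfolding w_def by (rule LeastI)
  then obtain b where "w1 < w" "conflicting parent b1 b" "has_qc V Votes Prepare w b"
    unfolding P_def by blast
  moreover have "\<not> P u" if "u < w" for u
    using that unfolding w_def by (rule not_less_Least)
  then have "\<not> (\<exists>u c. w1 < u \<and> u < w \<and> conflicting parent b1 c \<and> has_qc V Votes Prepare u c)"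
    unfolding P_def by blast
  ultimately show ?thesis by (rule that)
qed

lemma slash2_if_commit_then_first_conflicting_prepare:
  assumes "is_qc V Votes Commit w1 b1 Q1" "is_qc V Votes Prepare w b Qp"
    and "w1 < w" "conflicting parent b1 b"
    and "\<not> (\<exists>u c. w1 < u \<and> u < w \<and> conflicting parent b1 c \<and> has_qc V Votes Prepare u c)"
    and "x \<in> Q1 \<inter> Qp"
  shows "slash2 parent V Votes x"
proof -
  have "(x, Commit, w1, b1) \<in> Votes" "(x, Prepare, w, b) \<in> Votes"
    using assms(1,2,6) unfolding is_qc_def by auto
  with assms(3-5) show ?thesis unfolding slash2_def by (intro exI[of _ b1] exI[of _ w1] exI[of _ b] exI[of _ w]) simp
qed

lemma accountable_safety_ordered:
  assumes fin: "finite V" and valid: "valid_votes V Votes"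
    and c1: "has_qc V Votes Commit w1 b1" and c2: "has_qc V Votes Commit w2 b2"
    and conf: "conflicting parent b1 b2" and "w1 \<le> w2"
  shows "\<exists>S \<subseteq> V. 3 * card S \<ge> card V \<and> (\<forall>x\<in>S. violates parent V Votes x)"
proof -
  obtain Q1 where Q1: "is_qc V Votes Commit w1 b1 Q1" using c1 unfolding has_qc_def by blast
  show ?thesis
  proof (cases "w1 = w2")
    case True
    obtain Q2 where Q2: "is_qc V Votes Commit w1 b2 Q2"
      using c2 True unfolding has_qc_def by blast
    have "\<forall>x\<in>Q1 \<inter> Q2. violates parent V Votes x"
      using slash1_if_commit_qcs_same_view[OF Q1 Q2 conflicting_imp_neq[OF conf]]
      unfolding violates_def by blast
    with fin Q1 Q2 show ?thesis by (rule accountable_if_qc_intersection_violates)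
  next
    case False
    with \<open>w1 \<le> w2\<close> have "w1 < w2" by simp
    then obtain w b where w: "w1 < w" "conflicting parent b1 b" "has_qc V Votes Prepare w b"
      and first: "\<not> (\<exists>u c. w1 < u \<and> u < w \<and> conflicting parent b1 c \<and> has_qc V Votes Prepare u c)"
      using conf prepare_qc_if_commit_qc[OF fin valid c2] by (rule first_conflicting_prepare_qc)
    obtain Qp where Qp: "is_qc V Votes Prepare w b Qp" using w(3) unfolding has_qc_def by blast
    have "\<forall>x\<in>Q1 \<inter> Qp. violates parent V Votes x"
      using slash2_if_commit_then_first_conflicting_prepare[OF Q1 Qp w(1,2) first]
      unfolding violates_def by blast
    with fin Q1 Qp show ?thesis by (rule accountable_if_qc_intersection_violates)
  qed
qed

theorem lemma3:
  fixes parent :: "'b \<Rightarrow> 'b option"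
    and V :: "'v set"
    and Votes :: "('v, 'b) vote set"
  assumes "finite V"
    and "valid_votes V Votes"
    and "has_qc V Votes Commit w1 b1"
    and "has_qc V Votes Commit w2 b2"
    and "conflicting parent b1 b2"
  shows "\<exists>S \<subseteq> V. 3 * card S \<ge> card V \<and> (\<forall>x\<in>S. violates parent V Votes x)"
proof (cases "w1 \<le> w2")
  case True
  then show ?thesis by (rule accountable_safety_ordered[OF assms])
next
  case False
  then have "w2 \<le> w1" by simp
  then show ?thesis
    by (rule accountable_safety_ordered[OF assms(1,2,4,3) conflicting_sym[OF assms(5)]])
qed

end
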